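(* For every $n\ge1$ there is a bijection between $\bar{Q}_4(0,n)$ and $P_7(0,n)$.
   Context: Partitions: $\lambda_1\ge\cdots\ge\lambda_\ell>0$, $\ell(\lambda)=\ell$, $\lambda_i=0$ for $i>\ell$, $s(\lambda)$ the smallest part with $s(\emptyset)=+\infty$. Rank $=\lambda_1-\ell$. Durfee symbol $(\alpha,\beta)_j$ of $\lambda$: $j$ is the largest integer with $\lambda_j\ge j$, $\alpha$ is the conjugate of $(\lambda_1-j,\dots,\lambda_j-j)$, $\beta=(\lambda_{j+1},\lambda_{j+2},\dots)$; $|\lambda|=|\alpha|+|\beta|+j^2$. $\bar{Q}_4(0,n)$ is the set of partitions of $n$ whose Durfee symbol $(\alpha,\beta)_j$ satisfies $j\ge1$, $\ell(\beta)-\ell(\alpha)\ge1$, $\alpha_1=\alpha_2=j$, $s(\alpha)\ge2$, $\beta_1=\beta_2=j$ and $s(\beta)=2$. $P_7(0,n)$ is the set of partitions of $n$ with rank $\ge0$ whose Durfee symbol $(\gamma,\delta)_{j'}$ satisfies $j'\ge1$, $\ell(\gamma)=\ell(\delta)$, $\gamma_1=j'-1>\gamma_2$, $\delta_1=j'$, and $\delta$ has no part equal to $2$. *)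

theory Defs
  imports Main "HOL-Library.Extended_Nat"
begin

definition is_partition :: "nat list \<Rightarrow> bool" where
  "is_partition p \<longleftrightarrow> sorted_wrt (\<ge>) p \<and> 0 \<notin> set p"

definition partitions :: "nat \<Rightarrow> nat list set" where
  "partitions n = {p. is_partition p \<and> sum_list p = n}"

definition part :: "nat list \<Rightarrow> nat \<Rightarrow> nat" where
  "part p i = (if 1 \<le> i \<and> i \<le> length p then p ! (i - 1) else 0)"

definition smallest :: "nat list \<Rightarrow> enat" where
  "smallest p = (if p = [] then \<infinity> else enat (Min (set p)))"

definition rank :: "nat list \<Rightarrow> int" where
  "rank p = int (part p 1) - int (length p)"

definition conj :: "nat list \<Rightarrow> nat list" where
  "conj mu = map (\<lambda>k. length (filter (\<lambda>x. k \<le> x) mu)) [1..<Suc (Max (insert 0 (set mu)))]"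

definition durfee :: "nat list \<Rightarrow> nat" where
  "durfee p = Max (insert 0 {i. 1 \<le> i \<and> i \<le> length p \<and> i \<le> part p i})"

definition dalpha :: "nat list \<Rightarrow> nat list" where
  "dalpha p = conj (map (\<lambda>x. x - durfee p) (take (durfee p) p))"

definition dbeta :: "nat list \<Rightarrow> nat list" where
  "dbeta p = drop (durfee p) p"

definition Q4bar :: "nat \<Rightarrow> nat list set" where
  "Q4bar n = {p \<in> partitions n.
     (let j = durfee p; a = dalpha p; b = dbeta p in
       j \<ge> 1 \<and> int (length b) - int (length a) \<ge> 1 \<and>
       part a 1 = j \<and> part a 2 = j \<and> smallest a \<ge> 2 \<and>
       part b 1 = j \<and> part b 2 = j \<and> smallest b = 2)}"

definition P7 :: "nat \<Rightarrow> nat list set" where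
  "P7 n = {p \<in> partitions n. rank p \<ge> 0 \<and>
     (let j = durfee p; g = dalpha p; d = dbeta p in
       j \<ge> 1 \<and> length g = length d \<and>
       part g 1 = j - 1 \<and> j - 1 > part g 2 \<and>
       part d 1 = j \<and> 2 \<notin> set d)}"

end

theory Submission
  imports Defs
begin

(*
  A partition lies in Q4bar(0,n) iff its Durfee symbol is (j,j,ua | j,j,ub,2)_j with
  j >= 2, all parts of ua and ub in [2,j] and |ua| <= |ub|; it lies in P7(0,n) iff its
  Durfee symbol is (k-1,gt | k,dt)_k with k >= 3, all parts of gt in [1,k-2], all parts
  of dt in [1,k] other than 2, and |gt| = |dt|.  The bijection sends the first symbol to
  the second with k = j+1, gt = ub lowered by one in every part, and dt = ua raised by
  one in every part followed by |ub|-|ua| ones; the inverse raises gt and lowers the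
  parts of dt different from 1.  Both symbols have weight j^2+4j+2+|ua|+|ub|.
*)

definition count_ge :: "nat list \<Rightarrow> nat \<Rightarrow> nat" where
  "count_ge X k = length (filter (\<lambda>x. k \<le> x) X)"

lemma count_ge_Cons:
  "count_ge (x # xs) k = (if k \<le> x then Suc (count_ge xs k) else count_ge xs k)"
  by (simp add: count_ge_def)

lemma count_ge_zero: "\<forall>x\<in>set X. x < k \<Longrightarrow> count_ge X k = 0"
  unfolding count_ge_def by (auto simp: filter_empty_conv)

lemma count_ge_antimono: "k \<le> l \<Longrightarrow> count_ge X l \<le> count_ge X k"
  unfolding count_ge_def by (induction X) auto

lemma count_ge_le_length: "count_ge X k \<le> length X"
  unfolding count_ge_def by simp

lemma count_ge_one: "0 \<notin> set X \<Longrightarrow> count_ge X 1 = length X"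
  unfolding count_ge_def by (induction X) auto

lemma filter_upt_le: "m \<le> M \<Longrightarrow> filter (\<lambda>k. k \<le> m) [1..<Suc M] = [1..<Suc m]"
proof (induction M)
  case (Suc M)
  show ?case
  proof (cases "m = Suc M")
    case True
    then show ?thesis by (simp add: filter_id_conv del: upt_Suc)
  qed (use Suc in simp)
qed simp

lemma sum_list_indicator: "sum_list (map (\<lambda>i. if P i then 1 else 0) xs) = length (filter P xs)"
  by (induction xs) auto

lemma sum_count_ge: "\<forall>x\<in>set a. x \<le> j \<Longrightarrow> sum_list (map (count_ge a) [1..<Suc j]) = sum_list a"
proof (induction a)
  case (Cons x a)
  have "map (count_ge (x # a)) [1..<Suc j]
      = map (\<lambda>i. (if i \<le> x then 1 else 0) + count_ge a i) [1..<Suc j]"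
    by (auto simp: count_ge_Cons simp del: upt_Suc)
  then have "sum_list (map (count_ge (x # a)) [1..<Suc j])
      = sum_list (map (\<lambda>i. if i \<le> x then 1 else 0) [1..<Suc j]) + sum_list (map (count_ge a) [1..<Suc j])"
    by (simp only: sum_list_addf)
  also have "sum_list (map (\<lambda>i. if i \<le> x then 1 else 0) [1..<Suc j]) = x"
    using filter_upt_le[of x j] Cons.prems by (simp add: sum_list_indicator del: upt_Suc)
  finally show ?case using Cons by simp
qed (simp add: count_ge_def del: upt_Suc)

lemma part_Cons: "i \<ge> 1 \<Longrightarrow> part (x # xs) i = (if i = 1 then x else part xs (i - 1))"
  unfolding part_def by (auto simp: nth_Cons')

lemma part_le_head: "sorted_wrt (\<ge>) (x # xs) \<Longrightarrow> part (x # xs) i \<le> x"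
  unfolding part_def by (auto simp: nth_Cons' dest!: nth_mem)

lemma part_le_part1: "sorted_wrt (\<ge>) a \<Longrightarrow> part a i \<le> part a 1"
  by (cases a) (auto simp: part_le_head part_Cons, simp add: part_def)

lemma mem_le_part1: "sorted_wrt (\<ge>) b \<Longrightarrow> y \<in> set b \<Longrightarrow> y \<le> part b 1"
  by (cases b) (auto simp: part_def)

lemma part1_le_Max: "part X 1 \<le> Max (insert 0 (set X))"
  unfolding part_def by (cases X) auto

lemma part_mono:
  assumes "sorted_wrt (\<ge>) p" "1 \<le> i" "i \<le> i'"
  shows "part p i' \<le> part p i"
proof (cases "i' \<le> length p \<and> i \<noteq> i'")
  case True
  then have "p ! (i' - 1) \<le> p ! (i - 1)"
    using assms by (intro sorted_wrt_nth_less[OF assms(1)]) auto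
  then show ?thesis using True assms by (simp add: part_def)
qed (auto simp: part_def)

lemma part_drop: "i \<ge> 1 \<Longrightarrow> part (drop j p) i = part p (i + j)"
  unfolding part_def by (auto simp: add.commute)

lemma part_pos: "is_partition p \<Longrightarrow> 1 \<le> i \<Longrightarrow> i \<le> length p \<Longrightarrow> part p i > 0"
proof -
  assume p: "is_partition p" "1 \<le> i" "i \<le> length p"
  then have "p ! (i - 1) \<in> set p" by (intro nth_mem) auto
  then have "p ! (i - 1) \<noteq> 0" using p unfolding is_partition_def by metis
  then show ?thesis using p unfolding part_def by simp
qed

lemma partition_eqI:
  assumes p: "is_partition p" and q: "is_partition q"
    and parts: "\<And>i. i \<ge> 1 \<Longrightarrow> part p i = part q i"
  shows "p = q"
proof -
  have len: "length p = length q"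
  proof (rule ccontr)
    assume "length p \<noteq> length q"
    then consider "length p < length q" | "length q < length p" by linarith
    then show False
    proof cases
      case 1
      then have "part q (length q) > 0" using part_pos[OF q] by simp
      then show False using parts[of "length q"] 1 by (simp add: part_def)
    next
      case 2
      then have "part p (length p) > 0" using part_pos[OF p] by simp
      then show False using parts[of "length p"] 2 by (simp add: part_def)
    qed
  qed
  show ?thesis
  proof (rule nth_equalityI[OF len])
    fix i assume "i < length p"
    then show "p ! i = q ! i" using parts[of "Suc i"] len by (simp add: part_def)
  qed
qed

subsection \<open>Conjugation\<close>

lemma count_ge_part_galois:
  assumes "sorted_wrt (\<ge>) X" "k \<ge> 1" "i \<ge> 1"
  shows "i \<le> count_ge X k \<longleftrightarrow> k \<le> part X i"
  using assms
proof (induction X arbitrary: i)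
  case Nil
  then show ?case by (simp add: count_ge_def part_def)
next
  case (Cons x xs)
  show ?case
  proof (cases "k \<le> x")
    case False
    then have "count_ge (x # xs) k = 0" using Cons.prems(1) by (intro count_ge_zero) auto
    moreover have "part (x # xs) i \<le> x" using Cons.prems(1) by (rule part_le_head)
    ultimately show ?thesis using False Cons.prems by auto
  next
    case True
    have "i \<noteq> 1 \<Longrightarrow> i - 1 \<le> count_ge xs k \<longleftrightarrow> k \<le> part xs (i - 1)"
      using Cons by auto
    then show ?thesis using True Cons.prems by (auto simp: count_ge_Cons part_Cons)
  qed
qed

lemma part_conj: "k \<ge> 1 \<Longrightarrow> part (conj X) k = count_ge X k"
proof -
  assume k: "k \<ge> 1"
  define M where "M = Max (insert 0 (set X))"
  have len: "length (conj X) = M" by (simp add: conj_def M_def)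
  show ?thesis
  proof (cases "k \<le> M")
    case True
    have "[1..<Suc M] ! (k - 1) = k" using True k by (subst nth_upt) auto
    then have "conj X ! (k - 1) = count_ge X k"
      using True k by (simp add: conj_def M_def[symmetric] count_ge_def nth_upt del: upt_Suc)
    then show ?thesis using True k len by (simp add: part_def)
  next
    case False
    have "\<forall>x\<in>set X. x < k" using False unfolding M_def
      by (metis List.finite_set Max_ge finite_insert insertCI le_trans not_le_imp_less)
    then show ?thesis using False len by (simp add: part_def count_ge_zero)
  qed
qed

lemma conj_partition: "is_partition (conj X)"
proof -
  define M where "M = Max (insert 0 (set X))"
  have sorted: "sorted_wrt (\<ge>) (map (count_ge X) [1..<Suc M])"
    by (auto simp: sorted_wrt_map sorted_wrt_iff_nth_less count_ge_antimono simp del: upt_Suc)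
  have "0 \<notin> set (map (count_ge X) [1..<Suc M])"
  proof
    assume "0 \<in> set (map (count_ge X) [1..<Suc M])"
    then obtain k where k: "1 \<le> k" "k \<le> M" "count_ge X k = 0" by auto
    then have "M \<in> set X" unfolding M_def
      by (metis Max_in empty_not_insert finite_insert finite_set insertE not_one_le_zero le_0_eq)
    then show False using k by (auto simp: count_ge_def filter_empty_conv)
  qed
  with sorted show ?thesis unfolding is_partition_def conj_def M_def count_ge_def by simp
qed

lemma count_ge_column_lengths:
  assumes "sorted_wrt (\<ge>) a" "i \<ge> 1" "part a 1 \<le> m"
  shows "count_ge (map (count_ge a) [1..<Suc m]) i = part a i"
proof -
  have "count_ge (map (count_ge a) [1..<Suc m]) i
      = length (filter (\<lambda>k. i \<le> count_ge a k) [1..<Suc m])"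
    by (simp add: count_ge_def filter_map o_def del: upt_Suc)
  also have "filter (\<lambda>k. i \<le> count_ge a k) [1..<Suc m] = filter (\<lambda>k. k \<le> part a i) [1..<Suc m]"
    by (rule filter_cong) (use assms count_ge_part_galois in auto)
  also have "\<dots> = [1..<Suc (part a i)]"
    using part_le_part1[OF assms(1), of i] assms(3) by (intro filter_upt_le) auto
  finally show ?thesis by simp
qed

lemma count_ge_conj:
  assumes "sorted_wrt (\<ge>) X" "i \<ge> 1"
  shows "count_ge (conj X) i = part X i"
  unfolding conj_def count_ge_def[symmetric, abs_def]
  using count_ge_column_lengths[OF assms part1_le_Max] by (simp add: count_ge_def[abs_def])

lemma conj_column_lengths:
  assumes "is_partition a" "part a 1 \<le> m"
  shows "conj (map (count_ge a) [1..<Suc m]) = a"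
proof (rule partition_eqI[OF conj_partition assms(1)])
  fix i :: nat assume "1 \<le> i"
  then show "part (conj (map (count_ge a) [1..<Suc m])) i = part a i"
    using assms part_conj count_ge_column_lengths by (simp add: is_partition_def)
qed

subsection \<open>The Durfee square\<close>

lemma finite_durfee_candidates: "finite {i. 1 \<le> i \<and> i \<le> length p \<and> i \<le> part p i}"
  by (rule finite_subset[of _ "{..length p}"]) auto

lemma durfee_le_length: "durfee p \<le> length p"
  unfolding durfee_def using finite_durfee_candidates[of p] by (auto intro: Max.boundedI)

lemma durfee_le_part: "durfee p \<ge> 1 \<Longrightarrow> durfee p \<le> part p (durfee p)"
proof -
  assume j: "durfee p \<ge> 1"
  have "durfee p \<in> insert 0 {i. 1 \<le> i \<and> i \<le> length p \<and> i \<le> part p i}"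
    unfolding durfee_def using finite_durfee_candidates[of p] by (intro Max_in) auto
  then show ?thesis using j by auto
qed

lemma part_after_durfee: "part p (Suc (durfee p)) \<le> durfee p"
proof (rule ccontr)
  assume "\<not> ?thesis"
  then have big: "Suc (durfee p) \<le> part p (Suc (durfee p))" by simp
  then have "Suc (durfee p) \<le> length p" by (auto simp: part_def split: if_splits)
  then have "Suc (durfee p) \<in> insert 0 {i. 1 \<le> i \<and> i \<le> length p \<and> i \<le> part p i}"
    using big by auto
  then have "Suc (durfee p) \<le> durfee p"
    unfolding durfee_def[of p] using finite_durfee_candidates[of p] by (intro Max_ge) auto
  then show False by simp
qed

lemma durfee_eqI:
  assumes "1 \<le> j" "j \<le> length p" "j \<le> part p j" "\<And>i. j < i \<Longrightarrow> part p i < i"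
  shows "durfee p = j"
  unfolding durfee_def
proof (rule Max_eqI)
  fix y assume "y \<in> insert 0 {i. 1 \<le> i \<and> i \<le> length p \<and> i \<le> part p i}"
  then show "y \<le> j" using assms(4)[of y] by (cases "j < y") auto
qed (use assms finite_durfee_candidates in auto)

subsection \<open>Rebuilding a partition from its Durfee symbol\<close>

text \<open>The partition with Durfee square of side j, part a above the square (read as
  columns) and part b below it: its first j parts are j + count_ge a i.\<close>
definition from_symbol :: "nat \<Rightarrow> nat list \<Rightarrow> nat list \<Rightarrow> nat list" where
  "from_symbol j a b = map (\<lambda>i. j + count_ge a i) [1..<Suc j] @ b"

lemma part_from_symbol_square:
  "1 \<le> i \<Longrightarrow> i \<le> j \<Longrightarrow> part (from_symbol j a b) i = j + count_ge a i"
  unfolding part_def from_symbol_def by (auto simp: nth_append nth_upt simp del: upt_Suc)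

lemma part_from_symbol_below: "j < i \<Longrightarrow> part (from_symbol j a b) i = part b (i - j)"
  unfolding part_def from_symbol_def by (cases "j = 0") (auto simp: nth_append)

lemma length_from_symbol: "length (from_symbol j a b) = j + length b"
  by (simp add: from_symbol_def)

lemma sum_list_from_symbol:
  "\<forall>x\<in>set a. x \<le> j \<Longrightarrow> sum_list (from_symbol j a b) = j * j + sum_list a + sum_list b"
  using sum_count_ge by (simp add: from_symbol_def sum_list_addf sum_list_triv del: upt_Suc)

lemma is_partition_from_symbol:
  assumes "is_partition b" "part b 1 \<le> j" "1 \<le> j"
  shows "is_partition (from_symbol j a b)"
proof -
  have "sorted_wrt (\<ge>) (map (\<lambda>i. j + count_ge a i) [1..<Suc j])"
    by (auto simp: sorted_wrt_map sorted_wrt_iff_nth_less count_ge_antimono nth_upt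
        simp del: upt_Suc)
  moreover have "\<forall>y\<in>set b. y \<le> j"
    using mem_le_part1 assms(1,2) unfolding is_partition_def by fastforce
  ultimately show ?thesis using assms
    unfolding is_partition_def from_symbol_def by (auto simp: sorted_wrt_append simp del: upt_Suc)
qed

lemma durfee_from_symbol:
  assumes "sorted_wrt (\<ge>) b" "part b 1 \<le> j" "1 \<le> j"
  shows "durfee (from_symbol j a b) = j"
proof (rule durfee_eqI)
  show "j \<le> part (from_symbol j a b) j" using part_from_symbol_square[of j j a b] assms by simp
  show "j \<le> length (from_symbol j a b)" by (simp add: length_from_symbol)
  fix i assume "j < i"
  then have "part (from_symbol j a b) i = part b (i - j)" by (rule part_from_symbol_below)
  also have "\<dots> \<le> part b 1" using \<open>j < i\<close> by (intro part_mono[OF assms(1)]) auto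
  finally show "part (from_symbol j a b) i < i" using assms(2) \<open>j < i\<close> by simp
qed (use assms in auto)

lemma dbeta_from_symbol:
  assumes "sorted_wrt (\<ge>) b" "part b 1 \<le> j" "1 \<le> j"
  shows "dbeta (from_symbol j a b) = b"
  using durfee_from_symbol[OF assms] by (simp add: dbeta_def from_symbol_def)

lemma dalpha_from_symbol:
  assumes "is_partition a" "part a 1 \<le> j" "sorted_wrt (\<ge>) b" "part b 1 \<le> j" "1 \<le> j"
  shows "dalpha (from_symbol j a b) = a"
proof -
  have "map (\<lambda>x. x - j) (take j (from_symbol j a b)) = map (count_ge a) [1..<Suc j]"
    by (simp add: from_symbol_def o_def del: upt_Suc)
  then show ?thesis
    using durfee_from_symbol[OF assms(3-5)] conj_column_lengths[OF assms(1,2)]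
    by (simp add: dalpha_def del: upt_Suc)
qed

lemma durfee_symbol_admissible:
  assumes "is_partition p"
  shows "is_partition (dalpha p)" "is_partition (dbeta p)"
    "part (dalpha p) 1 \<le> durfee p" "part (dbeta p) 1 \<le> durfee p"
proof -
  show "is_partition (dalpha p)" by (simp add: dalpha_def conj_partition)
  show "is_partition (dbeta p)" using assms unfolding dbeta_def is_partition_def
    by (auto simp: sorted_wrt_drop dest: in_set_dropD)
  show "part (dalpha p) 1 \<le> durfee p"
    using part_conj[of 1] count_ge_le_length durfee_le_length[of p]
    by (simp add: dalpha_def) (metis le_trans length_map length_take min.absorb2 order_refl)
  show "part (dbeta p) 1 \<le> durfee p"
    using part_drop[of 1 "durfee p" p] part_after_durfee[of p] by (simp add: dbeta_def)
qed

lemma from_durfee_symbol: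
  assumes p: "is_partition p"
  shows "from_symbol (durfee p) (dalpha p) (dbeta p) = p"
proof -
  define j where "j = durfee p"
  define X where "X = map (\<lambda>x. x - j) (take j p)"
  have sp: "sorted_wrt (\<ge>) p" using p by (simp add: is_partition_def)
  have jl: "j \<le> length p" unfolding j_def by (rule durfee_le_length)
  have sX: "sorted_wrt (\<ge>) X" unfolding X_def
    by (simp add: sorted_wrt_map)
      (rule sorted_wrt_mono_rel[OF _ sorted_wrt_take[OF sp]], simp add: diff_le_mono)
  have "take j p = map (\<lambda>i. j + count_ge (dalpha p) i) [1..<Suc j]"
  proof (rule nth_equalityI)
    fix k assume "k < length (take j p)"
    then have kj: "k < j" by simp
    have "count_ge (dalpha p) (Suc k) = part X (Suc k)"
      using count_ge_conj[OF sX] by (simp add: dalpha_def X_def j_def)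
    also have "\<dots> = p ! k - j" using kj jl by (simp add: part_def X_def)
    finally have col: "count_ge (dalpha p) (Suc k) = p ! k - j" .
    have "j \<le> part p j" using durfee_le_part[of p] kj by (simp add: j_def)
    also have "part p j \<le> part p (Suc k)" using kj by (intro part_mono[OF sp]) auto
    also have "part p (Suc k) = p ! k" using kj jl by (simp add: part_def)
    finally show "take j p ! k = map (\<lambda>i. j + count_ge (dalpha p) i) [1..<Suc j] ! k"
      using kj col by (simp add: nth_upt del: upt_Suc)
  qed (use jl in simp)
  then show ?thesis
    using append_take_drop_id[of j p] by (simp add: from_symbol_def dbeta_def j_def del: upt_Suc)
qed

lemma enat_numeral_two: "(2 \<le> enat m) = (2 \<le> m)" "(enat m = 2) = (m = 2)"
  by (auto simp: numeral_eq_enat)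

lemma smallest_ge_two: "xs \<noteq> [] \<Longrightarrow> (smallest xs \<ge> 2) = (\<forall>x\<in>set xs. 2 \<le> x)"
  by (simp add: smallest_def enat_numeral_two)

lemma smallest_eq_two: "(smallest xs = 2) = (2 \<in> set xs \<and> (\<forall>x\<in>set xs. 2 \<le> x))"
proof (cases "xs = []")
  case False
  have "(Min (set xs) = 2) = (2 \<in> set xs \<and> (\<forall>x\<in>set xs. 2 \<le> x))"
  proof
    assume "Min (set xs) = 2"
    then show "2 \<in> set xs \<and> (\<forall>x\<in>set xs. 2 \<le> x)"
      using False Min_in[of "set xs"] Min_le[of "set xs"] by (metis List.finite_set set_empty)
  qed (auto intro!: Min_eqI)
  then show ?thesis using False by (simp add: smallest_def enat_numeral_two)
qed (simp add: smallest_def)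

lemma last_eq_min:
  assumes "sorted_wrt (\<ge>) (xs :: nat list)" "y \<in> set xs" "\<forall>x\<in>set xs. y \<le> x"
  shows "last xs = y"
proof -
  have "last xs \<le> y" using assms(1,2) by (induction xs) (auto simp: last_ConsR)
  moreover have "last xs \<in> set xs" using assms(2) by (intro last_in_set) auto
  ultimately show ?thesis using assms(3) by fastforce
qed

lemma two_leading_parts:
  assumes "part a 1 = j" "part a 2 = j" "1 \<le> j"
  obtains rest where "a = j # j # rest"
  using assms unfolding part_def by (cases a; cases "tl a") (auto split: if_splits)

lemma sorted_minus_one: "sorted_wrt (\<ge>) (xs :: nat list) \<Longrightarrow> sorted_wrt (\<ge>) (map (\<lambda>x. x - 1) xs)"
  by (simp add: sorted_wrt_map) (rule sorted_wrt_mono_rel[of _ "(\<ge>)"], auto simp: diff_le_mono)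

subsection \<open>Parametrising Q4bar\<close>

definition Q_params :: "nat \<Rightarrow> nat list \<Rightarrow> nat list \<Rightarrow> bool" where
  "Q_params j ua ub \<longleftrightarrow> j \<ge> 2 \<and> sorted_wrt (\<ge>) ua \<and> (\<forall>x\<in>set ua. 2 \<le> x \<and> x \<le> j) \<and>
     sorted_wrt (\<ge>) ub \<and> (\<forall>x\<in>set ub. 2 \<le> x \<and> x \<le> j) \<and> length ua \<le> length ub"

definition Q_partition :: "nat \<Rightarrow> nat list \<Rightarrow> nat list \<Rightarrow> nat list" where
  "Q_partition j ua ub = from_symbol j (j # j # ua) (j # j # ub @ [2])"

lemma Q_partition_symbol:
  assumes "Q_params j ua ub"
  shows "is_partition (Q_partition j ua ub)" "durfee (Q_partition j ua ub) = j"
    "dalpha (Q_partition j ua ub) = j # j # ua" "dbeta (Q_partition j ua ub) = j # j # ub @ [2]"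
proof -
  have a: "is_partition (j # j # ua)" "part (j # j # ua) 1 \<le> j"
    and b: "is_partition (j # j # ub @ [2])" "part (j # j # ub @ [2]) 1 \<le> j" and "1 \<le> j"
    using assms by (auto simp: Q_params_def is_partition_def sorted_wrt_append part_def)
  then show "is_partition (Q_partition j ua ub)" "durfee (Q_partition j ua ub) = j"
    "dalpha (Q_partition j ua ub) = j # j # ua" "dbeta (Q_partition j ua ub) = j # j # ub @ [2]"
    unfolding Q_partition_def is_partition_def
    using is_partition_from_symbol durfee_from_symbol dalpha_from_symbol dbeta_from_symbol
    by (simp_all add: is_partition_def)
qed

lemma sum_list_Q_partition:
  "Q_params j ua ub \<Longrightarrow> sum_list (Q_partition j ua ub) = j * j + 4 * j + 2 + sum_list ua + sum_list ub"
  unfolding Q_partition_def Q_params_def by (subst sum_list_from_symbol) auto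

lemma Q_partition_in_Q4bar:
  assumes "Q_params j ua ub"
  shows "Q_partition j ua ub \<in> Q4bar (sum_list (Q_partition j ua ub))"
proof -
  have "smallest (j # j # ua) \<ge> 2" "smallest (j # j # ub @ [2]) = 2"
    using assms by (auto simp: Q_params_def smallest_ge_two smallest_eq_two)
  then show ?thesis using assms Q_partition_symbol[OF assms]
    by (simp add: Q4bar_def partitions_def Q_params_def part_def)
qed

lemma Q4bar_parametrised:
  assumes "p \<in> Q4bar n"
  obtains j ua ub where "Q_params j ua ub" "p = Q_partition j ua ub"
proof -
  define j a b where "j = durfee p" "a = dalpha p" "b = dbeta p"
  have p: "is_partition p" using assms by (simp add: Q4bar_def partitions_def)
  note admissible = durfee_symbol_admissible[OF p, folded j_a_b_def]
  have c: "j \<ge> 1" "length b \<ge> length a + 1" "part a 1 = j" "part a 2 = j"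
    "smallest a \<ge> 2" "part b 1 = j" "part b 2 = j" "smallest b = 2"
    using assms unfolding Q4bar_def j_a_b_def by (auto simp: Let_def)
  have sa: "sorted_wrt (\<ge>) a" and sb: "sorted_wrt (\<ge>) b"
    using admissible by (auto simp: is_partition_def)
  obtain ua where a: "a = j # j # ua" using two_leading_parts c(1,3,4) by metis
  obtain b' where b: "b = j # j # b'" using two_leading_parts c(1,6,7) by metis
  have b2: "2 \<in> set b" "\<forall>x\<in>set b. 2 \<le> x" using c(8) smallest_eq_two by auto
  have "b' \<noteq> []" using c(2) a b by auto
  moreover have "last b' = 2" using last_eq_min[OF sb b2] b \<open>b' \<noteq> []\<close> by simp
  ultimately have b_split: "b = j # j # butlast b' @ [2]"
    using b append_butlast_last_id by fastforce
  have "\<forall>x\<in>set a. 2 \<le> x" using c(5) smallest_ge_two[of a] a by auto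
  moreover have "\<forall>x\<in>set a. x \<le> j" "\<forall>x\<in>set b. x \<le> j"
    using mem_le_part1 sa sb c(3,6) by fastforce+
  ultimately have "Q_params j ua (butlast b')"
    unfolding Q_params_def using sa sb b2 c(2) unfolding a b_split
    by (auto simp: sorted_wrt_append)
  moreover have "p = Q_partition j ua (butlast b')"
    using from_durfee_symbol[OF p] a b_split by (simp add: Q_partition_def j_a_b_def)
  ultimately show ?thesis by (rule that)
qed

subsection \<open>Parametrising P7\<close>

definition P_params :: "nat \<Rightarrow> nat list \<Rightarrow> nat list \<Rightarrow> bool" where
  "P_params k gt dt \<longleftrightarrow> k \<ge> 3 \<and> sorted_wrt (\<ge>) gt \<and> (\<forall>x\<in>set gt. 1 \<le> x \<and> x \<le> k - 2) \<and>
     sorted_wrt (\<ge>) dt \<and> (\<forall>x\<in>set dt. 1 \<le> x \<and> x \<le> k \<and> x \<noteq> 2) \<and> length gt = length dt"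

definition P_partition :: "nat \<Rightarrow> nat list \<Rightarrow> nat list \<Rightarrow> nat list" where
  "P_partition k gt dt = from_symbol k ((k - 1) # gt) (k # dt)"

lemma P_partition_symbol:
  assumes "P_params k gt dt"
  shows "is_partition (P_partition k gt dt)" "durfee (P_partition k gt dt) = k"
    "dalpha (P_partition k gt dt) = (k - 1) # gt" "dbeta (P_partition k gt dt) = k # dt"
proof -
  have a: "is_partition ((k - 1) # gt)" "part ((k - 1) # gt) 1 \<le> k"
    and b: "is_partition (k # dt)" "part (k # dt) 1 \<le> k" and "1 \<le> k"
    using assms by (auto simp: P_params_def is_partition_def part_def)
  then show "is_partition (P_partition k gt dt)" "durfee (P_partition k gt dt) = k"
    "dalpha (P_partition k gt dt) = (k - 1) # gt" "dbeta (P_partition k gt dt) = k # dt"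
    unfolding P_partition_def
    using is_partition_from_symbol durfee_from_symbol dalpha_from_symbol dbeta_from_symbol
    by (simp_all add: is_partition_def)
qed

lemma sum_list_P_partition:
  "P_params k gt dt \<Longrightarrow> sum_list (P_partition k gt dt) = k * k + (k - 1) + k + sum_list gt + sum_list dt"
  unfolding P_partition_def P_params_def by (subst sum_list_from_symbol) auto

text \<open>The rank is 0: the first part is k + |gt| + 1 and there are k + |dt| + 1 parts.\<close>
lemma P_partition_in_P7:
  assumes "P_params k gt dt"
  shows "P_partition k gt dt \<in> P7 (sum_list (P_partition k gt dt))"
proof -
  have P: "k \<ge> 3" "\<forall>x\<in>set gt. 1 \<le> x \<and> x \<le> k - 2" "length gt = length dt"
    using assms by (auto simp: P_params_def)
  have "part (P_partition k gt dt) 1 = k + length ((k - 1) # gt)"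
    using part_from_symbol_square[of 1 k] count_ge_one[of "(k - 1) # gt"] P
    by (auto simp: P_partition_def)
  then have "rank (P_partition k gt dt) \<ge> 0"
    by (simp add: rank_def P_partition_def length_from_symbol P(3))
  moreover have "part ((k - 1) # gt) 2 < k - 1"
    using P by (cases gt) (auto simp: part_def)
  ultimately show ?thesis using assms P_partition_symbol[OF assms]
    by (auto simp: P7_def partitions_def P_params_def Let_def part_def)
qed

lemma P7_parametrised:
  assumes "q \<in> P7 n"
  obtains k gt dt where "P_params k gt dt" "q = P_partition k gt dt"
proof -
  define k g d where "k = durfee q" "g = dalpha q" "d = dbeta q"
  have q: "is_partition q" using assms by (simp add: P7_def partitions_def)
  note admissible = durfee_symbol_admissible[OF q, folded k_g_d_def]
  have c: "k \<ge> 1" "length g = length d" "part g 1 = k - 1" "k - 1 > part g 2"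
    "part d 1 = k" "2 \<notin> set d"
    using assms unfolding P7_def k_g_d_def by (auto simp: Let_def)
  have sg: "sorted_wrt (\<ge>) g" and sd: "sorted_wrt (\<ge>) d"
    and pos: "0 \<notin> set g" "0 \<notin> set d"
    using admissible by (auto simp: is_partition_def)
  obtain gt where g: "g = (k - 1) # gt"
    using c(3,4) unfolding part_def by (cases g) (auto split: if_splits)
  obtain dt where d: "d = k # dt"
    using c(1,5) unfolding part_def by (cases d) (auto split: if_splits)
  have "k \<ge> 3" using c(1,4,6) d by auto
  moreover have "\<forall>x\<in>set gt. 1 \<le> x \<and> x \<le> k - 2"
  proof
    fix x assume x: "x \<in> set gt"
    then have "x \<le> part g 2" using sg g mem_le_part1[of gt x] by (simp add: part_Cons)
    then show "1 \<le> x \<and> x \<le> k - 2" using c(4) pos(1) x g by (cases x) auto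
  qed
  moreover have "\<forall>x\<in>set dt. 1 \<le> x \<and> x \<le> k \<and> x \<noteq> 2"
    using sd pos(2) c(6) d by (auto simp: Suc_le_eq) (metis gr0I)
  ultimately have "P_params k gt dt"
    unfolding P_params_def using sg sd c(2) g d by simp
  moreover have "q = P_partition k gt dt"
    using from_durfee_symbol[OF q] g d by (simp add: P_partition_def k_g_d_def)
  ultimately show ?thesis by (rule that)
qed

definition lower :: "nat list \<Rightarrow> nat list" where
  "lower xs = map (\<lambda>x. x - 1) xs"

definition raise_pad :: "nat list \<Rightarrow> nat list \<Rightarrow> nat list" where
  "raise_pad ua ub = map Suc ua @ replicate (length ub - length ua) 1"

lemma Q_to_P_params:
  assumes "Q_params j ua ub"
  shows "P_params (j + 1) (lower ub) (raise_pad ua ub)"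
proof -
  have "sorted_wrt (\<ge>) (replicate m (1 :: nat))" for m by (induction m) auto
  then show ?thesis using assms sorted_minus_one[of ub]
  by (auto simp: Q_params_def P_params_def lower_def raise_pad_def sorted_wrt_map
      sorted_wrt_append)
qed

lemma P_to_Q_params:
  assumes "P_params k gt dt"
  shows "Q_params (k - 1) (lower (filter (\<lambda>x. x \<noteq> 1) dt)) (map Suc gt)"
proof -
  have "length (filter (\<lambda>x. x \<noteq> 1) dt) \<le> length dt" by simp
  then show ?thesis
    using assms sorted_minus_one[OF sorted_wrt_filter, of dt]
    by (auto simp: Q_params_def P_params_def lower_def sorted_wrt_map)
qed

lemma lower_raise_pad:
  "\<forall>x\<in>set ua. 2 \<le> x \<Longrightarrow> lower (filter (\<lambda>x. x \<noteq> 1) (raise_pad ua ub)) = ua"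
  by (induction ua) (auto simp: lower_def raise_pad_def)

lemma raise_lower: "\<forall>x\<in>set ub. 1 \<le> x \<Longrightarrow> map Suc (lower ub) = ub"
  by (induction ub) (auto simp: lower_def)

lemma split_off_ones:
  assumes "sorted_wrt (\<ge>) dt" "\<forall>x\<in>set dt. 1 \<le> x"
  shows "dt = filter (\<lambda>x. x \<noteq> 1) dt @ replicate (length dt - length (filter (\<lambda>x. x \<noteq> 1) dt)) (1 :: nat)"
  using assms
proof (induction dt)
  case (Cons x xs)
  show ?case
  proof (cases "x = 1")
    case True
    then have "\<forall>y\<in>set xs. y = 1" using Cons.prems by fastforce
    then have "filter (\<lambda>x. x \<noteq> 1) xs = []" "replicate (length xs) 1 = xs"
      by (auto simp: filter_empty_conv replicate_length_same)
    then show ?thesis using True by simp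
  next
    case False
    have "length (filter (\<lambda>x. x \<noteq> 1) xs) \<le> length xs" by simp
    then show ?thesis using False Cons by (simp add: Suc_diff_le[symmetric])
  qed
qed simp

lemma raise_pad_lower:
  assumes "P_params k gt dt"
  shows "raise_pad (lower (filter (\<lambda>x. x \<noteq> 1) dt)) (map Suc gt) = dt"
proof -
  have "sorted_wrt (\<ge>) dt" "\<forall>x\<in>set dt. 1 \<le> x" "length gt = length dt"
    using assms by (auto simp: P_params_def)
  moreover have "map Suc (lower (filter (\<lambda>x. x \<noteq> 1) dt)) = filter (\<lambda>x. x \<noteq> 1) dt"
    using raise_lower[of "filter (\<lambda>x. x \<noteq> 1) dt"] assms by (auto simp: P_params_def)
  ultimately show ?thesis using split_off_ones[of dt] by (simp add: raise_pad_def lower_def)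
qed

lemma sum_list_P_partition_of_Q:
  assumes "Q_params j ua ub"
  shows "sum_list (P_partition (j + 1) (lower ub) (raise_pad ua ub)) = sum_list (Q_partition j ua ub)"
proof -
  have ub: "\<forall>x\<in>set ub. 1 \<le> x" and len: "length ua \<le> length ub"
    using assms by (auto simp: Q_params_def)
  have "sum_list (lower ub) + length ub = sum_list ub"
    using ub by (induction ub) (auto simp: lower_def)
  then show ?thesis
    using sum_list_P_partition[OF Q_to_P_params[OF assms]] sum_list_Q_partition[OF assms]
      sum_list_Suc[of id ua] len
    by (simp add: raise_pad_def sum_list_replicate algebra_simps)
qed

subsection \<open>The bijection\<close>

definition phi :: "nat list \<Rightarrow> nat list" where
  "phi p = (let j = durfee p; ua = drop 2 (dalpha p); ub = drop 2 (butlast (dbeta p))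
            in P_partition (j + 1) (lower ub) (raise_pad ua ub))"

definition psi :: "nat list \<Rightarrow> nat list" where
  "psi q = (let k = durfee q; gt = tl (dalpha q); dt = tl (dbeta q)
            in Q_partition (k - 1) (lower (filter (\<lambda>x. x \<noteq> 1) dt)) (map Suc gt))"

lemma phi_Q_partition:
  "Q_params j ua ub \<Longrightarrow> phi (Q_partition j ua ub) = P_partition (j + 1) (lower ub) (raise_pad ua ub)"
  using Q_partition_symbol[of j ua ub] by (simp add: phi_def butlast_append)

lemma psi_P_partition:
  "P_params k gt dt \<Longrightarrow>
     psi (P_partition k gt dt) = Q_partition (k - 1) (lower (filter (\<lambda>x. x \<noteq> 1) dt)) (map Suc gt)"
  using P_partition_symbol[of k gt dt] by (simp add: psi_def)

lemma phi_maps_Q4bar: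
  assumes "p \<in> Q4bar n"
  shows "phi p \<in> P7 n" "psi (phi p) = p"
proof -
  obtain j ua ub where Q: "Q_params j ua ub" and p: "p = Q_partition j ua ub"
    using Q4bar_parametrised[OF assms] .
  have P: "P_params (j + 1) (lower ub) (raise_pad ua ub)" by (rule Q_to_P_params[OF Q])
  have "n = sum_list p" using assms by (simp add: Q4bar_def partitions_def)
  then show "phi p \<in> P7 n"
    using P_partition_in_P7[OF P] sum_list_P_partition_of_Q[OF Q] phi_Q_partition[OF Q] p by simp
  have "lower (filter (\<lambda>x. x \<noteq> 1) (raise_pad ua ub)) = ua"
    by (rule lower_raise_pad) (use Q in \<open>simp add: Q_params_def\<close>)
  moreover have "map Suc (lower ub) = ub"
    by (rule raise_lower) (use Q in \<open>auto simp: Q_params_def\<close>)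
  ultimately show "psi (phi p) = p"
    using psi_P_partition[OF P] phi_Q_partition[OF Q] p by simp
qed

lemma psi_maps_P7:
  assumes "q \<in> P7 n"
  shows "psi q \<in> Q4bar n" "phi (psi q) = q"
proof -
  obtain k gt dt where P: "P_params k gt dt" and q: "q = P_partition k gt dt"
    using P7_parametrised[OF assms] .
  define ua ub where "ua = lower (filter (\<lambda>x. x \<noteq> 1) dt)" "ub = map Suc gt"
  have Q: "Q_params (k - 1) ua ub" unfolding ua_ub_def by (rule P_to_Q_params[OF P])
  have round_trip: "P_partition (k - 1 + 1) (lower ub) (raise_pad ua ub) = q"
    using P raise_pad_lower[OF P] q
    by (simp add: ua_ub_def lower_def o_def P_params_def)
  show "phi (psi q) = q"
    using phi_Q_partition[OF Q] psi_P_partition[OF P] round_trip q by (simp add: ua_ub_def)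
  have "n = sum_list q" using assms by (simp add: P7_def partitions_def)
  then show "psi q \<in> Q4bar n"
    using Q_partition_in_Q4bar[OF Q] sum_list_P_partition_of_Q[OF Q] round_trip
      psi_P_partition[OF P] q by (simp add: ua_ub_def)
qed

theorem lemma5p4:
  fixes n :: nat
  assumes "n \<ge> 1"
  shows "\<exists>f. bij_betw f (Q4bar n) (P7 n)"
proof (intro exI bij_betw_byWitness[where f' = psi])
  show "\<forall>p\<in>Q4bar n. psi (phi p) = p" using phi_maps_Q4bar(2) by blast
  show "\<forall>q\<in>P7 n. phi (psi q) = q" using psi_maps_P7(2) by blast
  show "phi ` Q4bar n \<subseteq> P7 n" using phi_maps_Q4bar(1) by blast
  show "psi ` P7 n \<subseteq> Q4bar n" using psi_maps_P7(1) by blast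
qed

end
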